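(* Fix a test example $z'$ and $\lambda>0$. Assume that $F_S\,\nabla_\theta f(z',\theta_S^* )\neq 0$, that $\mathrm{Var}_{A\sim D_a}[f(z',\theta_A^* )]>0$, and that $\alpha_{z'}\neq 0$, so that all quantities below are well defined and positive where they appear under square roots. If $$\frac{r_{z',\lambda}}{\sqrt{o_{z',\lambda}\, t_{1,z',\lambda}}}>\frac{t_{2,z',\lambda}}{\sqrt{t_{3,z',\lambda}\, t_{1,z',\lambda}}},$$ then $\dot c_p(\lambda;z')>0$.
   Context: Let $n\ge 2$ and let $S=\{z_1,\dots,z_n\}$ be a training set. For parameters $\theta\in\mathbb{R}^p$, let $L(z,\theta)>0$ be a loss that is differentiable in $\theta$. Set $p(z,\theta):=e^{-L(z,\theta)}\in(0,1)$ and define the model output $f(z,\theta):=\ln\frac{p(z,\theta)}{1-p(z,\theta)}$. Let $\theta_S^*\in\mathbb{R}^p$ satisfy $\sum_{i=1}^n\nabla_\theta L(z_i,\theta_S^* )=0$ (for example, a minimizer of $R_S(\theta)=\frac1n\sum_i L(z_i,\theta)$). For every subset $A\subseteq S$, let $\theta_A^*\in\mathbb{R}^p$ be a fixed parameter vector (the model trained on $A$). Fix an integer $1\le a<n$, and let $D_a$ be the uniform distribution over the subsets $A\subseteq S$ of size $a$. Let $J\in\mathbb{R}^{n\times p}$ be the matrix whose $i$-th row is $\nabla_\theta L(z_i,\theta_S^* )^\top$, and let $F_S:=\frac1n J^\top J=\frac1n\sum_i\nabla_\theta L(z_i,\theta_S^* )\nabla_\theta L(z_i,\theta_S^* )^\top$.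 For a test example $z'$ and $\lambda>0$, define the IFFIM attributor $$\tau_\lambda(z',z):=-\nabla_\theta f(z',\theta_S^* )^\top(F_S+\lambda I_p)^{-1}\nabla_\theta L(z,\theta_S^* ).$$ The population Pearson LDS $c_p(\lambda;z')$ is the Pearson correlation, under $A\sim D_a$, between the random variables $f(z',\theta_A^* )$ and $\sum_{z\in A}\tau_\lambda(z',z)$. Write $\dot c_p(\lambda;z'):=\partial c_p(\lambda;z')/\partial\lambda$. Define: - $\alpha_{z'}\in\mathbb{R}^n$ by $\alpha_{z',i}:=\mathbb{E}_{A\sim D_a}[f(z',\theta_A^* )\mid z_i\in A]-\mathbb{E}_{A\sim D_a}[f(z',\theta_A^* )]$; - $g_{z'}:=\frac1n\sum_{i=1}^n\alpha_{z',i}\nabla_\theta L(z_i,\theta_S^* )=\frac1n J^\top\alpha_{z'}$; - $t_{k,z',\lambda}:=\nabla_\theta f(z',\theta_S^* )^\top(F_S+\lambda I_p)^{-k}F_S\nabla_\theta f(z',\theta_S^* )$ for $k\in\mathbb{N}_{\ge1}$; - $r_{z',\lambda}:=-\nabla_\theta f(z',\theta_S^* )^\top(F_S+\lambda I_p)^{-1}g_{z'}$; - $o_{z',\lambda}:=\alpha_{z'}^\top(JJ^\top+n\lambda I_n)^{-1}\alpha_{z'}$. *)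

theory Defs
  imports "HOL-Analysis.Analysis"
begin

definition grad :: "('a::real_inner \<Rightarrow> real) \<Rightarrow> 'a \<Rightarrow> 'a" where
  "grad g x = (THE D. GDERIV g x :> D)"

definition model_out :: "('z \<Rightarrow> 'p \<Rightarrow> real) \<Rightarrow> 'z \<Rightarrow> 'p \<Rightarrow> real" where
  "model_out L z \<theta> = (let p = exp (- L z \<theta>) in ln (p / (1 - p)))"

(* Support of D_a: subsets of the (index set of the) training set of size a *)
definition subsets_a :: "nat \<Rightarrow> 'n::finite set set" where
  "subsets_a a = {A. card A = a}"

definition E_Da :: "nat \<Rightarrow> ('n::finite set \<Rightarrow> real) \<Rightarrow> real" where
  "E_Da a X = (\<Sum>A\<in>subsets_a a. X A) / real (card (subsets_a a :: 'n set set))"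

definition E_Da_cond :: "nat \<Rightarrow> 'n::finite \<Rightarrow> ('n set \<Rightarrow> real) \<Rightarrow> real" where
  "E_Da_cond a i X =
     (\<Sum>A\<in>{A\<in>subsets_a a. i \<in> A}. X A) / real (card {A\<in>subsets_a a. i \<in> A})"

definition Cov_Da :: "nat \<Rightarrow> ('n::finite set \<Rightarrow> real) \<Rightarrow> ('n set \<Rightarrow> real) \<Rightarrow> real" where
  "Cov_Da a X Y = E_Da a (\<lambda>A. (X A - E_Da a X) * (Y A - E_Da a Y))"

definition Var_Da :: "nat \<Rightarrow> ('n::finite set \<Rightarrow> real) \<Rightarrow> real" where
  "Var_Da a X = Cov_Da a X X"

definition pearson_Da :: "nat \<Rightarrow> ('n::finite set \<Rightarrow> real) \<Rightarrow> ('n set \<Rightarrow> real) \<Rightarrow> real" where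
  "pearson_Da a X Y = Cov_Da a X Y / (sqrt (Var_Da a X) * sqrt (Var_Da a Y))"

definition Jac :: "('z \<Rightarrow> real^'p \<Rightarrow> real) \<Rightarrow> ('n \<Rightarrow> 'z) \<Rightarrow> real^'p \<Rightarrow> real^'p^'n" where
  "Jac L zs \<theta>S = (\<chi> i. grad (L (zs i)) \<theta>S)"

definition FS :: "('z \<Rightarrow> real^'p \<Rightarrow> real) \<Rightarrow> ('n::finite \<Rightarrow> 'z) \<Rightarrow> real^'p \<Rightarrow> real^'p^'p" where
  "FS L zs \<theta>S = (1 / real CARD('n)) *\<^sub>R (transpose (Jac L zs \<theta>S) ** Jac L zs \<theta>S)"

definition tau :: "('z \<Rightarrow> real^'p \<Rightarrow> real) \<Rightarrow> ('n::finite \<Rightarrow> 'z) \<Rightarrow> real^'p \<Rightarrow> real \<Rightarrow> 'z \<Rightarrow> 'z \<Rightarrow> real" where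
  "tau L zs \<theta>S lam z' z =
     - (grad (model_out L z') \<theta>S \<bullet>
        (matrix_inv (FS L zs \<theta>S + lam *\<^sub>R mat 1) *v grad (L z) \<theta>S))"

definition cp :: "('z \<Rightarrow> real^'p \<Rightarrow> real) \<Rightarrow> ('n::finite \<Rightarrow> 'z) \<Rightarrow> real^'p \<Rightarrow> ('n set \<Rightarrow> real^'p)
                  \<Rightarrow> nat \<Rightarrow> 'z \<Rightarrow> real \<Rightarrow> real" where
  "cp L zs \<theta>S \<theta>A a z' lam =
     pearson_Da a (\<lambda>A. model_out L z' (\<theta>A A)) (\<lambda>A. \<Sum>i\<in>A. tau L zs \<theta>S lam z' (zs i))"

definition alpha :: "('z \<Rightarrow> real^'p \<Rightarrow> real) \<Rightarrow> ('n::finite set \<Rightarrow> real^'p) \<Rightarrow> nat \<Rightarrow> 'z \<Rightarrow> real^'n" where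
  "alpha L \<theta>A a z' = (\<chi> i. E_Da_cond a i (\<lambda>A. model_out L z' (\<theta>A A))
                           - E_Da a (\<lambda>A. model_out L z' (\<theta>A A)))"

definition gvec :: "('z \<Rightarrow> real^'p \<Rightarrow> real) \<Rightarrow> ('n::finite \<Rightarrow> 'z) \<Rightarrow> real^'p \<Rightarrow> ('n set \<Rightarrow> real^'p)
                    \<Rightarrow> nat \<Rightarrow> 'z \<Rightarrow> real^'p" where
  "gvec L zs \<theta>S \<theta>A a z' = (1 / real CARD('n)) *\<^sub>R (transpose (Jac L zs \<theta>S) *v alpha L \<theta>A a z')"

definition tk :: "('z \<Rightarrow> real^'p \<Rightarrow> real) \<Rightarrow> ('n::finite \<Rightarrow> 'z) \<Rightarrow> real^'p \<Rightarrow> nat \<Rightarrow> 'z \<Rightarrow> real \<Rightarrow> real" where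
  "tk L zs \<theta>S k z' lam =
     (let v = grad (model_out L z') \<theta>S;
          Minv = matrix_inv (FS L zs \<theta>S + lam *\<^sub>R mat 1)
      in v \<bullet> (((\<lambda>x. Minv *v x) ^^ k) (FS L zs \<theta>S *v v)))"

definition r_val :: "('z \<Rightarrow> real^'p \<Rightarrow> real) \<Rightarrow> ('n::finite \<Rightarrow> 'z) \<Rightarrow> real^'p \<Rightarrow> ('n set \<Rightarrow> real^'p)
                  \<Rightarrow> nat \<Rightarrow> 'z \<Rightarrow> real \<Rightarrow> real" where
  "r_val L zs \<theta>S \<theta>A a z' lam =
     - (grad (model_out L z') \<theta>S \<bullet>
        (matrix_inv (FS L zs \<theta>S + lam *\<^sub>R mat 1) *v gvec L zs \<theta>S \<theta>A a z'))"

definition o_val :: "('z \<Rightarrow> real^'p \<Rightarrow> real) \<Rightarrow> ('n::finite \<Rightarrow> 'z) \<Rightarrow> real^'p \<Rightarrow> ('n set \<Rightarrow> real^'p)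
                  \<Rightarrow> nat \<Rightarrow> 'z \<Rightarrow> real \<Rightarrow> real" where
  "o_val L zs \<theta>S \<theta>A a z' lam =
     alpha L \<theta>A a z' \<bullet>
       (matrix_inv (Jac L zs \<theta>S ** transpose (Jac L zs \<theta>S) + (real CARD('n) * lam) *\<^sub>R mat 1)
          *v alpha L \<theta>A a z')"

end

theory Submission
  imports Defs
begin

text \<open>
Write R(mu) = (F_S + mu I)^-1, v = grad f(z', theta_S) and J for the Jacobian. The attribution
scores are w_i = tau_mu(z', z_i) = -(J R(mu) v)_i, and stationarity of theta_S makes them sum to
zero. Counting the size-a subsets through one or two fixed points then gives
Cov(f, sum_{i in A} w_i) = a r(mu) and Var(sum_{i in A} w_i) = a (n - a) / (n - 1) t_2(mu),
so c_p(mu) = C r(mu) / sqrt (t_2(mu)) with a constant C > 0. By the resolvent identity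
r' = v^T R^2 g and t_2' = -2 t_3, so the derivative of c_p has the sign of r' t_2 + r t_3.
Cauchy-Schwarz for the inner product defined by (J J^T + n mu I)^-1 gives r'^2 <= t_3 o, and the
hypothesis (in which t_1 cancels) says r sqrt t_3 > t_2 sqrt o; hence
r t_3 > t_2 sqrt (t_3 o) >= - r' t_2.
\<close>

section \<open>Positive semidefinite matrices\<close>

definition psd_matrix :: "real^'n^'n \<Rightarrow> bool" where
  "psd_matrix F \<longleftrightarrow> (\<forall>x y. (F *v x) \<bullet> y = x \<bullet> (F *v y)) \<and> (\<forall>x. 0 \<le> x \<bullet> (F *v x))"

lemma psd_matrix_self_adjoint: "psd_matrix F \<Longrightarrow> (F *v x) \<bullet> y = x \<bullet> (F *v y)"
  unfolding psd_matrix_def by blast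

lemma psd_matrix_nonneg: "psd_matrix F \<Longrightarrow> 0 \<le> x \<bullet> (F *v x)"
  unfolding psd_matrix_def by blast

lemma psd_matrix_scaleR: "psd_matrix F \<Longrightarrow> 0 \<le> c \<Longrightarrow> psd_matrix (c *\<^sub>R F)"
  unfolding psd_matrix_def by (simp add: scaleR_matrix_vector_assoc[symmetric])

lemma inner_matrix_vector_mult_transpose:
  "((A::real^'n^'m) *v x) \<bullet> y = x \<bullet> (transpose A *v y)"
  by (metis dot_lmul_matrix inner_commute transpose_matrix_vector)

lemma inner_transpose_mult_apply:
  "x \<bullet> ((transpose J ** J) *v y) = (J *v x) \<bullet> (J *v (y :: real^'p))"
  unfolding matrix_vector_mul_assoc[symmetric] by (rule inner_matrix_vector_mult_transpose[symmetric])

lemma psd_matrix_transpose_mult: "psd_matrix (transpose J ** (J :: real^'p^'n))"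
  unfolding psd_matrix_def
  using inner_transpose_mult_apply[of _ J] inner_commute[of "(transpose J ** J) *v _"]
  by (simp add: inner_commute)

lemma quadratic_nonneg_imp_discriminant_le:
  fixes A B C :: real
  assumes nonneg: "\<And>t. 0 \<le> A + 2 * t * B + t\<^sup>2 * C" and "0 \<le> C"
  shows "B\<^sup>2 \<le> A * C"
proof (cases "C = 0")
  case True
  have "B = 0"
  proof (rule ccontr)
    assume "B \<noteq> 0"
    then have "A + 2 * (- (A + 1) / (2 * B)) * B + (- (A + 1) / (2 * B))\<^sup>2 * C = -1"
      using True by (simp add: field_simps)
    then show False using nonneg by (metis neg_0_le_iff_le not_one_le_zero)
  qed
  then show ?thesis using True by simp
next
  case False
  then have "0 < C" using \<open>0 \<le> C\<close> by simp
  have "0 \<le> A + 2 * (- B / C) * B + (- B / C)\<^sup>2 * C" by (rule nonneg)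
  also have "\<dots> = A - B\<^sup>2 / C" using \<open>0 < C\<close> by (simp add: field_simps power2_eq_square)
  finally show ?thesis using \<open>0 < C\<close> by (simp add: field_simps)
qed

lemma psd_matrix_cauchy_schwarz:
  assumes "psd_matrix F"
  shows "(x \<bullet> (F *v y))\<^sup>2 \<le> (x \<bullet> (F *v x)) * (y \<bullet> (F *v y))"
proof (rule quadratic_nonneg_imp_discriminant_le)
  fix t :: real
  have "0 \<le> (x + t *\<^sub>R y) \<bullet> (F *v (x + t *\<^sub>R y))"
    using assms by (rule psd_matrix_nonneg)
  also have "\<dots> = x \<bullet> (F *v x) + 2 * t * (x \<bullet> (F *v y)) + t\<^sup>2 * (y \<bullet> (F *v y))"
    using psd_matrix_self_adjoint[OF assms, of x y]
    by (simp add: matrix_vector_right_distrib matrix_vector_mult_scaleR inner_add_left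
        inner_add_right inner_commute[of y] power2_eq_square algebra_simps)
  finally show "0 \<le> x \<bullet> (F *v x) + 2 * t * (x \<bullet> (F *v y)) + t\<^sup>2 * (y \<bullet> (F *v y))" .
next
  show "0 \<le> y \<bullet> (F *v y)" using assms by (rule psd_matrix_nonneg)
qed

lemma psd_matrix_inner_pos:
  assumes "psd_matrix F" "F *v y \<noteq> 0"
  shows "0 < y \<bullet> (F *v y)"
proof -
  have "((F *v y) \<bullet> (F *v y))\<^sup>2 \<le> ((F *v y) \<bullet> (F *v (F *v y))) * (y \<bullet> (F *v y))"
    using psd_matrix_cauchy_schwarz[OF assms(1)] by (simp add: inner_commute)
  moreover have "0 < (F *v y) \<bullet> (F *v y)" using assms(2) by simp
  moreover have "0 \<le> y \<bullet> (F *v y)" using assms(1) by (rule psd_matrix_nonneg)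
  ultimately show ?thesis by (metis less_eq_real_def mult_zero_right not_less zero_less_power)
qed

lemma matrix_vector_mult_shift:
  "((F::real^'n^'n) + \<mu> *\<^sub>R mat 1) *v x = F *v x + \<mu> *\<^sub>R x"
  by (simp add: matrix_vector_mult_add_rdistrib scaleR_matrix_vector_assoc[symmetric])

lemma psd_shift_inner_ge: "psd_matrix F \<Longrightarrow> \<mu> * (x \<bullet> x) \<le> x \<bullet> ((F + \<mu> *\<^sub>R mat 1) *v x)"
  unfolding matrix_vector_mult_shift by (simp add: inner_add_right psd_matrix_nonneg)

lemma psd_shift_norm_ge:
  assumes "psd_matrix F" "0 < \<mu>"
  shows "\<mu> * norm x \<le> norm ((F + \<mu> *\<^sub>R mat 1) *v x)"
proof -
  have "\<mu> * norm x * norm x \<le> x \<bullet> ((F + \<mu> *\<^sub>R mat 1) *v x)"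
    using psd_shift_inner_ge[OF assms(1), of \<mu> x] by (simp add: dot_square_norm power2_eq_square)
  also have "\<dots> \<le> norm x * norm ((F + \<mu> *\<^sub>R mat 1) *v x)"
    by (rule norm_cauchy_schwarz)
  finally have "\<mu> * norm x * norm x \<le> norm x * norm ((F + \<mu> *\<^sub>R mat 1) *v x)" .
  then show ?thesis
    by (cases "x = 0") (auto simp: mult.commute)
qed

lemma invertible_psd_shift:
  assumes "psd_matrix F" "0 < \<mu>"
  shows "invertible (F + \<mu> *\<^sub>R mat 1)"
proof -
  have "x = 0" if "(F + \<mu> *\<^sub>R mat 1) *v x = 0" for x
    using psd_shift_norm_ge[OF assms, of x] that assms(2) by (simp add: mult_le_0_iff)
  then show ?thesis using matrix_left_invertible_ker invertible_left_inverse by blast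
qed

lemma psd_shift_self_adjoint:
  "psd_matrix F \<Longrightarrow> ((F + \<mu> *\<^sub>R mat 1) *v x) \<bullet> y = x \<bullet> ((F + \<mu> *\<^sub>R mat 1) *v y)"
  unfolding matrix_vector_mult_shift
  by (simp add: inner_add_left inner_add_right psd_matrix_self_adjoint)

section \<open>Resolvents\<close>

definition resolvent :: "real^'n^'n \<Rightarrow> real \<Rightarrow> real^'n^'n" where
  "resolvent F \<mu> = matrix_inv (F + \<mu> *\<^sub>R mat 1)"

context
  fixes F :: "real^'n^'n" and \<mu> :: real
  assumes psd: "psd_matrix F" and pos: "0 < \<mu>"
begin

lemma resolvent_inverse:
  "(F + \<mu> *\<^sub>R mat 1) ** resolvent F \<mu> = mat 1" "resolvent F \<mu> ** (F + \<mu> *\<^sub>R mat 1) = mat 1"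
  using invertible_psd_shift[OF psd pos] unfolding resolvent_def matrix_inv_def invertible_def
  by (metis (mono_tags, lifting) someI_ex)+

lemma shift_resolvent_apply: "(F + \<mu> *\<^sub>R mat 1) *v (resolvent F \<mu> *v y) = y"
  by (simp add: matrix_vector_mul_assoc resolvent_inverse)

lemma resolvent_shift_apply: "resolvent F \<mu> *v ((F + \<mu> *\<^sub>R mat 1) *v y) = y"
  by (simp add: matrix_vector_mul_assoc resolvent_inverse)

lemma resolvent_self_adjoint: "(resolvent F \<mu> *v x) \<bullet> y = x \<bullet> (resolvent F \<mu> *v y)"
  by (metis psd psd_shift_self_adjoint shift_resolvent_apply)

lemma resolvent_commute: "F *v (resolvent F \<mu> *v x) = resolvent F \<mu> *v (F *v x)"
proof -
  have "F *v ((F + \<mu> *\<^sub>R mat 1) *v y) = (F + \<mu> *\<^sub>R mat 1) *v (F *v y)" for y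
    by (simp add: matrix_vector_mult_shift matrix_vector_right_distrib matrix_vector_mult_scaleR)
  then show ?thesis by (metis resolvent_shift_apply shift_resolvent_apply)
qed

lemma resolvent_eq_0_iff: "resolvent F \<mu> *v y = 0 \<longleftrightarrow> y = 0"
  by (metis matrix_vector_mult_0_right shift_resolvent_apply)

lemma norm_resolvent_le: "norm (resolvent F \<mu> *v y) \<le> norm y / \<mu>"
  using psd_shift_norm_ge[OF psd pos, of "resolvent F \<mu> *v y"] pos
  by (simp add: shift_resolvent_apply field_simps)

lemma inner_resolvent_pos:
  assumes "y \<noteq> 0" shows "0 < y \<bullet> (resolvent F \<mu> *v y)"
proof -
  let ?u = "resolvent F \<mu> *v y"
  have "\<mu> * (?u \<bullet> ?u) \<le> ?u \<bullet> ((F + \<mu> *\<^sub>R mat 1) *v ?u)"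
    by (rule psd_shift_inner_ge[OF psd])
  moreover have "0 < \<mu> * (?u \<bullet> ?u)" using assms pos by (simp add: resolvent_eq_0_iff)
  ultimately show ?thesis by (simp add: shift_resolvent_apply inner_commute)
qed

lemma inner_resolvent_power_pos:
  assumes "F *v y \<noteq> 0"
  shows "0 < y \<bullet> ((\<lambda>x. resolvent F \<mu> *v x) ^^ k) (F *v y)"
  using assms
proof (induction k arbitrary: y rule: nat_induct2)
  case 0
  then show ?case using psd_matrix_inner_pos[OF psd] by simp
next
  case 1
  let ?u = "resolvent F \<mu> *v y"
  have "F *v ?u \<noteq> 0" using 1 by (simp add: resolvent_commute resolvent_eq_0_iff)
  then have "0 < (F *v ?u) \<bullet> (F *v ?u) + \<mu> * (?u \<bullet> (F *v ?u))"
    using pos by (simp add: add_pos_nonneg psd_matrix_nonneg[OF psd])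
  also have "\<dots> = ((F + \<mu> *\<^sub>R mat 1) *v ?u) \<bullet> (F *v ?u)"
    by (simp add: matrix_vector_mult_shift inner_add_left)
  also have "\<dots> = y \<bullet> (resolvent F \<mu> *v (F *v y))"
    by (simp add: shift_resolvent_apply resolvent_commute)
  finally show ?case by simp
next
  case (step k)
  let ?R = "\<lambda>x. resolvent F \<mu> *v x"
  have "F *v ?R y \<noteq> 0" using step.prems by (simp add: resolvent_commute resolvent_eq_0_iff)
  then have "0 < ?R y \<bullet> (?R ^^ k) (F *v ?R y)" by (rule step.IH)
  also have "\<dots> = y \<bullet> (?R ^^ Suc (Suc k)) (F *v y)"
    by (simp add: resolvent_self_adjoint resolvent_commute funpow_swap1)
  finally show ?case by simp
qed

end

lemma resolvent_identity:
  assumes "psd_matrix F" "0 < \<mu>" "0 < l"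
  shows "resolvent F \<mu> *v y - resolvent F l *v y = (l - \<mu>) *\<^sub>R (resolvent F \<mu> *v (resolvent F l *v y))"
proof -
  let ?z = "resolvent F l *v y"
  have "resolvent F \<mu> *v y - ?z
      = resolvent F \<mu> *v ((F + l *\<^sub>R mat 1) *v ?z) - resolvent F \<mu> *v ((F + \<mu> *\<^sub>R mat 1) *v ?z)"
    by (simp add: shift_resolvent_apply[OF assms(1,3)] resolvent_shift_apply[OF assms(1,2)])
  also have "\<dots> = resolvent F \<mu> *v ((F + l *\<^sub>R mat 1) *v ?z - (F + \<mu> *\<^sub>R mat 1) *v ?z)"
    by (simp add: matrix_vector_mult_diff_distrib)
  also have "(F + l *\<^sub>R mat 1) *v ?z - (F + \<mu> *\<^sub>R mat 1) *v ?z = (l - \<mu>) *\<^sub>R ?z"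
    by (simp add: matrix_vector_mult_shift scaleR_diff_left)
  finally show ?thesis by (simp add: matrix_vector_mult_scaleR)
qed

lemma tendsto_resolvent:
  assumes psd: "psd_matrix F" and l: "0 < l"
  shows "((\<lambda>\<mu>. resolvent F \<mu> *v y) \<longlongrightarrow> resolvent F l *v y) (at l)"
proof -
  let ?z = "resolvent F l *v y"
  have "\<forall>\<^sub>F \<mu> in at l. norm (resolvent F \<mu> *v y - ?z) \<le> \<bar>l - \<mu>\<bar> * (norm ?z / \<mu>)"
    using order_tendstoD(1)[OF tendsto_ident_at l]
  proof eventually_elim
    case (elim \<mu>)
    have "norm (resolvent F \<mu> *v y - ?z) = \<bar>l - \<mu>\<bar> * norm (resolvent F \<mu> *v ?z)"
      by (simp add: resolvent_identity[OF psd elim l, of y])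
    also have "\<dots> \<le> \<bar>l - \<mu>\<bar> * (norm ?z / \<mu>)"
      by (rule mult_left_mono[OF norm_resolvent_le[OF psd elim]]) simp
    finally show ?case .
  qed
  moreover have "((\<lambda>\<mu>. \<bar>l - \<mu>\<bar> * (norm ?z / \<mu>)) \<longlongrightarrow> 0) (at l)"
  proof -
    have "((\<lambda>\<mu>. \<bar>l - \<mu>\<bar> * (norm ?z / \<mu>)) \<longlongrightarrow> \<bar>l - l\<bar> * (norm ?z / l)) (at l)"
      using l by (intro tendsto_intros) auto
    then show ?thesis by simp
  qed
  ultimately have "((\<lambda>\<mu>. resolvent F \<mu> *v y - ?z) \<longlongrightarrow> 0) (at l)"
    by (rule Lim_null_comparison)
  then show ?thesis by (simp add: LIM_zero_iff)
qed

lemma has_vector_derivative_resolvent: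
  assumes psd: "psd_matrix F" and l: "0 < l"
  shows "((\<lambda>\<mu>. resolvent F \<mu> *v y) has_vector_derivative
           - (resolvent F l *v (resolvent F l *v y))) (at l)"
proof -
  let ?z = "resolvent F l *v y"
  have "\<forall>\<^sub>F \<mu> in at l. norm (resolvent F \<mu> *v ?z - resolvent F l *v ?z) =
      norm (resolvent F \<mu> *v y - resolvent F l *v y - (\<mu> - l) *\<^sub>R - (resolvent F l *v ?z)) / norm (\<mu> - l)"
    using order_tendstoD(1)[OF tendsto_ident_at l] eventually_neq_at_within[of l]
  proof eventually_elim
    case (elim \<mu>)
    have "resolvent F \<mu> *v y - resolvent F l *v y - (\<mu> - l) *\<^sub>R - (resolvent F l *v ?z)
        = (l - \<mu>) *\<^sub>R (resolvent F \<mu> *v ?z - resolvent F l *v ?z)"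
      unfolding resolvent_identity[OF psd elim(1) l, of y] by (simp add: algebra_simps)
    then show ?case using elim(2) by (simp add: abs_minus_commute)
  qed
  moreover have "((\<lambda>\<mu>. norm (resolvent F \<mu> *v ?z - resolvent F l *v ?z)) \<longlongrightarrow> 0) (at l)"
    using tendsto_resolvent[OF psd l, of ?z] by (simp add: tendsto_norm_zero_iff LIM_zero_iff)
  ultimately have "((\<lambda>\<mu>. norm (resolvent F \<mu> *v y - resolvent F l *v y
      - (\<mu> - l) *\<^sub>R - (resolvent F l *v ?z)) / norm (\<mu> - l)) \<longlongrightarrow> 0) (at l)"
    by (rule Lim_transform_eventually[rotated])
  then show ?thesis
    using bounded_linear_scaleR_left[of "- (resolvent F l *v ?z)"]
    unfolding has_vector_derivative_def has_derivative_iff_norm by simp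
qed

lemma psd_matrix_resolvent:
  assumes "psd_matrix F" "0 < \<mu>"
  shows "psd_matrix (resolvent F \<mu>)"
  unfolding psd_matrix_def
  using resolvent_self_adjoint[OF assms] inner_resolvent_pos[OF assms]
  by (metis inner_zero_left order.strict_implies_order order_refl)

lemma has_real_derivative_inner_resolvent:
  assumes "psd_matrix F" "0 < l"
  shows "((\<lambda>\<mu>. x \<bullet> (resolvent F \<mu> *v y)) has_real_derivative
           - (x \<bullet> (resolvent F l *v (resolvent F l *v y)))) (at l)"
  using bounded_linear.has_vector_derivative[OF bounded_linear_inner_right
      has_vector_derivative_resolvent[OF assms]]
  by (simp add: has_real_derivative_iff_has_vector_derivative)

lemma has_real_derivative_inner_resolvent_square:
  assumes psd: "psd_matrix F" and l: "0 < l"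
  shows "((\<lambda>\<mu>. x \<bullet> (resolvent F \<mu> *v (resolvent F \<mu> *v y))) has_real_derivative
           - 2 * (x \<bullet> (resolvent F l *v (resolvent F l *v (resolvent F l *v y))))) (at l)"
proof -
  let ?R = "resolvent F l"
  have "((\<lambda>\<mu>. (resolvent F \<mu> *v x) \<bullet> (resolvent F \<mu> *v y)) has_real_derivative
      (?R *v x) \<bullet> - (?R *v (?R *v y)) + - (?R *v (?R *v x)) \<bullet> (?R *v y)) (at l)"
    using bounded_bilinear.has_vector_derivative[OF bounded_bilinear_inner
        has_vector_derivative_resolvent[OF psd l] has_vector_derivative_resolvent[OF psd l]]
    by (simp add: has_real_derivative_iff_has_vector_derivative)
  also have "(?R *v x) \<bullet> - (?R *v (?R *v y)) + - (?R *v (?R *v x)) \<bullet> (?R *v y)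
      = - 2 * (x \<bullet> (?R *v (?R *v (?R *v y))))"
    by (simp add: resolvent_self_adjoint[OF psd l])
  finally have deriv: "((\<lambda>\<mu>. (resolvent F \<mu> *v x) \<bullet> (resolvent F \<mu> *v y)) has_real_derivative
      - 2 * (x \<bullet> (?R *v (?R *v (?R *v y))))) (at l)" .
  have eq: "(resolvent F \<mu> *v x) \<bullet> (resolvent F \<mu> *v y)
      = x \<bullet> (resolvent F \<mu> *v (resolvent F \<mu> *v y))" if "\<mu> \<in> {0<..}" for \<mu>
    using that by (simp add: resolvent_self_adjoint[OF psd])
  show ?thesis
    by (rule has_field_derivative_transform_within_open[OF deriv open_greaterThan]) (use l eq in auto)
qed

lemma inner_gram_transpose_shift:
  fixes J :: "real^'p^'n" and N :: real and w :: "real^'p"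
  assumes N: "0 < N" and F_def: "F = (1 / N) *\<^sub>R (transpose J ** J)"
  defines "x \<equiv> (1 / N) *\<^sub>R (J *v w)"
  shows "x \<bullet> ((J ** transpose J + (N * \<mu>) *\<^sub>R mat 1) *v x) = (F *v w) \<bullet> ((F + \<mu> *\<^sub>R mat 1) *v w)"
proof -
  have Jx: "transpose J *v x = F *v w"
    unfolding x_def F_def
    by (simp add: matrix_vector_mult_scaleR matrix_vector_mul_assoc scaleR_matrix_vector_assoc[symmetric]
        del: transpose_matrix_vector)
  have xx: "(N * \<mu>) * (x \<bullet> x) = \<mu> * (w \<bullet> (F *v w))"
    unfolding x_def F_def using N
    by (simp add: scaleR_matrix_vector_assoc[symmetric] inner_transpose_mult_apply power2_eq_square
        field_simps)
  have "x \<bullet> ((J ** transpose J + (N * \<mu>) *\<^sub>R mat 1) *v x)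
      = (transpose J *v x) \<bullet> (transpose J *v x) + (N * \<mu>) * (x \<bullet> x)"
    by (simp add: matrix_vector_mult_shift inner_add_right matrix_vector_mul_assoc[symmetric]
        inner_matrix_vector_mult_transpose del: transpose_matrix_vector)
  also have "\<dots> = (F *v w) \<bullet> ((F + \<mu> *\<^sub>R mat 1) *v w)"
    unfolding Jx xx by (simp add: matrix_vector_mult_shift inner_add_right inner_commute)
  finally show ?thesis .
qed

lemma resolvent_gram_cauchy_schwarz:
  fixes J :: "real^'p^'n" and \<alpha> :: "real^'n" and N :: real
  assumes N: "0 < N" and \<mu>: "0 < \<mu>" and F_def: "F = (1 / N) *\<^sub>R (transpose J ** J)"
  defines "R \<equiv> resolvent F \<mu>" and "H \<equiv> resolvent (J ** transpose J) (N * \<mu>)"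
  shows "(v \<bullet> (R *v (R *v ((1 / N) *\<^sub>R (transpose J *v \<alpha>)))))\<^sup>2
           \<le> (v \<bullet> (R *v (R *v (R *v (F *v v))))) * (\<alpha> \<bullet> (H *v \<alpha>))"
proof -
  \<comment> \<open>Cauchy-Schwarz for H after moving J across: (J J^T + N mu I) J = N J (F + mu I).\<close>
  have F: "psd_matrix F"
    unfolding F_def using N by (intro psd_matrix_scaleR psd_matrix_transpose_mult) simp
  have G: "psd_matrix (J ** transpose J)"
    using psd_matrix_transpose_mult[of "transpose J"] by simp
  have N\<mu>: "0 < N * \<mu>" using N \<mu> by simp
  let ?M = "J ** transpose J + (N * \<mu>) *\<^sub>R mat 1"
  define w where "w = R *v (R *v v)"
  define x where "x = (1 / N) *\<^sub>R (J *v w)"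
  have "v \<bullet> (R *v (R *v ((1 / N) *\<^sub>R (transpose J *v \<alpha>)))) = w \<bullet> ((1 / N) *\<^sub>R (transpose J *v \<alpha>))"
    unfolding w_def R_def by (metis resolvent_self_adjoint[OF F \<mu>])
  also have "\<dots> = x \<bullet> \<alpha>"
    unfolding x_def by (simp add: inner_matrix_vector_mult_transpose matrix_vector_mult_scaleR)
  also have "\<dots> = (?M *v x) \<bullet> (H *v \<alpha>)"
    unfolding H_def by (metis psd_shift_self_adjoint[OF G] shift_resolvent_apply[OF G N\<mu>])
  finally have "(v \<bullet> (R *v (R *v ((1 / N) *\<^sub>R (transpose J *v \<alpha>)))))\<^sup>2
      \<le> ((?M *v x) \<bullet> (H *v (?M *v x))) * (\<alpha> \<bullet> (H *v \<alpha>))"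
    using psd_matrix_cauchy_schwarz[OF psd_matrix_resolvent[OF G N\<mu>], of "?M *v x" \<alpha>]
    unfolding H_def by (simp add: inner_commute)
  also have "(?M *v x) \<bullet> (H *v (?M *v x)) = x \<bullet> (?M *v x)"
    unfolding H_def by (simp add: resolvent_shift_apply[OF G N\<mu>] inner_commute)
  also have "\<dots> = (F *v w) \<bullet> ((F + \<mu> *\<^sub>R mat 1) *v w)"
    unfolding x_def by (rule inner_gram_transpose_shift[OF N F_def])
  also have "\<dots> = (F *v w) \<bullet> (R *v v)"
    unfolding w_def R_def by (simp add: shift_resolvent_apply[OF F \<mu>])
  also have "\<dots> = w \<bullet> (R *v (F *v v))"
    unfolding R_def by (simp add: psd_matrix_self_adjoint[OF F] resolvent_commute[OF F \<mu>])
  also have "\<dots> = v \<bullet> (R *v (R *v (R *v (F *v v))))"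
    unfolding w_def R_def by (metis resolvent_self_adjoint[OF F \<mu>])
  finally show ?thesis .
qed

section \<open>Uniformly random subsets of fixed size\<close>

lemma card_supersets_of_card:
  fixes T :: "'n::finite set"
  assumes "card T \<le> a"
  shows "card {A. card A = a \<and> T \<subseteq> A} = (CARD('n) - card T) choose (a - card T)"
proof -
  have "{A. card A = a \<and> T \<subseteq> A} = (\<lambda>B. B \<union> T) ` {B. B \<subseteq> - T \<and> card B = a - card T}"
  proof (intro set_eqI iffI)
    fix A assume "A \<in> {A. card A = a \<and> T \<subseteq> A}"
    then have "A = (A - T) \<union> T" "A - T \<subseteq> - T" "card (A - T) = a - card T"
      by (auto simp: card_Diff_subset)
    then show "A \<in> (\<lambda>B. B \<union> T) ` {B. B \<subseteq> - T \<and> card B = a - card T}" by blast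
  next
    fix A assume "A \<in> (\<lambda>B. B \<union> T) ` {B. B \<subseteq> - T \<and> card B = a - card T}"
    then obtain B where B: "B \<subseteq> - T" "card B = a - card T" "A = B \<union> T" by auto
    then have "card A = card B + card T" by (simp add: card_Un_disjoint disjoint_eq_subset_Compl)
    then show "A \<in> {A. card A = a \<and> T \<subseteq> A}" using B assms by auto
  qed
  moreover have "inj_on (\<lambda>B. B \<union> T) {B. B \<subseteq> - T \<and> card B = a - card T}"
    by (rule inj_onI) blast
  moreover have "card (- T) = CARD('n) - card T"
    by (simp add: Compl_eq_Diff_UNIV card_Diff_subset)
  ultimately show ?thesis by (simp add: card_image n_subsets)
qed

lemma card_subsets_a: "card (subsets_a a :: 'n::finite set set) = CARD('n) choose a"
  using n_subsets[of "UNIV :: 'n set" a] by (simp add: subsets_a_def)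

lemma card_subsets_a_mem:
  "CARD('n) * card {A \<in> subsets_a a. (i::'n::finite) \<in> A} = a * card (subsets_a a :: 'n set set)"
proof (cases a)
  case 0
  then show ?thesis by (auto simp: subsets_a_def)
next
  case (Suc k)
  have "{A \<in> subsets_a a. i \<in> A} = {A. card A = a \<and> {i} \<subseteq> A}"
    by (auto simp: subsets_a_def)
  then have "card {A \<in> subsets_a a. i \<in> A} = (CARD('n) - 1) choose k"
    using card_supersets_of_card[of "{i}" a] Suc by simp
  then show ?thesis
    using binomial_absorption[of k "CARD('n)"] by (simp add: Suc card_subsets_a)
qed

lemma card_subsets_a_mem2:
  assumes "(i::'n::finite) \<noteq> j"
  shows "CARD('n) * (CARD('n) - 1) * card {A \<in> subsets_a a. i \<in> A \<and> j \<in> A}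
           = a * (a - 1) * card (subsets_a a :: 'n set set)"
proof (cases "a < 2")
  case True
  have "{A \<in> subsets_a a. i \<in> A \<and> j \<in> A} = {}"
  proof (rule equals0I)
    fix A assume "A \<in> {A \<in> subsets_a a. i \<in> A \<and> j \<in> A}"
    then have "card A = a" "{i, j} \<subseteq> A" by (simp_all add: subsets_a_def)
    then have "card {i, j} \<le> a" by (metis card_mono finite)
    then show False using assms True by simp
  qed
  moreover have "a * (a - 1) = 0" using True by (cases a) auto
  ultimately show ?thesis by (metis card.empty mult_0 mult_0_right)
next
  case False
  then obtain k where a: "a = Suc (Suc k)" by (metis add_2_eq_Suc le_add_diff_inverse not_less)
  have "{A \<in> subsets_a a. i \<in> A \<and> j \<in> A} = {A. card A = a \<and> {i, j} \<subseteq> A}"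
    by (auto simp: subsets_a_def)
  then have card2: "card {A \<in> subsets_a a. i \<in> A \<and> j \<in> A} = (CARD('n) - 2) choose k"
    using card_supersets_of_card[of "{i, j}" a] assms a by (simp add: numeral_2_eq_2)
  have "a * (a - 1) * card (subsets_a a :: 'n set set)
      = Suc k * (Suc (Suc k) * (CARD('n) choose Suc (Suc k)))"
    by (simp add: a card_subsets_a algebra_simps)
  also have "\<dots> = CARD('n) * (Suc k * ((CARD('n) - 1) choose Suc k))"
    by (simp only: binomial_absorption mult.left_commute)
  also have "\<dots> = CARD('n) * ((CARD('n) - 1) * ((CARD('n) - 2) choose k))"
    by (metis binomial_absorption diff_diff_left one_add_one)
  finally show ?thesis by (simp add: card2 mult.assoc)
qed

lemma card_subsets_a_mem_eq:
  "real (card {A \<in> subsets_a a. (i::'n::finite) \<in> A})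
     = real a / real CARD('n) * real (card (subsets_a a :: 'n set set))"
  using arg_cong[OF card_subsets_a_mem[of a i], of real] by (simp add: field_simps)

lemma card_subsets_a_mem2_eq:
  assumes "(i::'n::finite) \<noteq> j"
  shows "real (card {A \<in> subsets_a a. i \<in> A \<and> j \<in> A})
           = real a * (real a - 1) / (real CARD('n) * (real CARD('n) - 1))
             * real (card (subsets_a a :: 'n set set))"
proof -
  have "card {i, j} \<le> CARD('n)" by (rule card_mono) auto
  then have N: "1 < real CARD('n)" using assms by simp
  have "real CARD('n) * real (CARD('n) - 1) * card {A \<in> subsets_a a. i \<in> A \<and> j \<in> A}
      = real a * real (a - 1) * card (subsets_a a :: 'n set set)"
    using arg_cong[OF card_subsets_a_mem2[OF assms, of a], of real] by (simp only: of_nat_mult)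
  moreover have "real (CARD('n) - 1) = real CARD('n) - 1" using N by (simp add: of_nat_diff)
  moreover have "real a * real (a - 1) = real a * (real a - 1)" by (cases a) auto
  ultimately have "real CARD('n) * (real CARD('n) - 1) * card {A \<in> subsets_a a. i \<in> A \<and> j \<in> A}
      = real a * (real a - 1) * card (subsets_a a :: 'n set set)"
    by simp
  then show ?thesis using N by (simp add: field_simps)
qed

lemma sum_subsets_sum_swap:
  "(\<Sum>A\<in>SS. \<Sum>i\<in>A. h i A) = (\<Sum>i\<in>UNIV. \<Sum>A\<in>{A \<in> SS. i \<in> A}. h i A)"
  for SS :: "'n::finite set set" and h :: "'n \<Rightarrow> 'n set \<Rightarrow> real"
  using sum.swap_restrict[of SS "UNIV :: 'n set" "\<lambda>A i. h i A" "\<lambda>A i. i \<in> A"] by simp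

lemma E_Da_sum_weights:
  fixes w :: "'n::finite \<Rightarrow> real"
  assumes "sum w UNIV = 0"
  shows "E_Da a (\<lambda>A. \<Sum>i\<in>A. w i) = 0"
  unfolding E_Da_def sum_subsets_sum_swap
  by (simp add: card_subsets_a_mem_eq sum_divide_distrib[symmetric] sum_distrib_left[symmetric] assms)

lemma Cov_Da_sum_weights:
  fixes X :: "'n::finite set \<Rightarrow> real" and w :: "'n \<Rightarrow> real"
  assumes w: "sum w UNIV = 0" and a: "1 \<le> a" "a \<le> CARD('n)"
  shows "Cov_Da a X (\<lambda>A. \<Sum>i\<in>A. w i)
           = real a / real CARD('n) * (\<Sum>i\<in>UNIV. w i * (E_Da_cond a i X - E_Da a X))"
proof -
  let ?S = "subsets_a a :: 'n set set"
  let ?c0 = "real (card ?S)" and ?c1 = "\<lambda>i. real (card {A \<in> ?S. i \<in> A})"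
  have c0: "0 < ?c0" using a by (simp add: card_subsets_a)
  note c1 = card_subsets_a_mem_eq[of a]
  have cond: "(\<Sum>A\<in>{A \<in> ?S. i \<in> A}. X A - E_Da a X) = ?c1 i * (E_Da_cond a i X - E_Da a X)" for i
    using c0 a by (simp add: E_Da_cond_def sum_subtractf c1 algebra_simps)
  have "Cov_Da a X (\<lambda>A. \<Sum>i\<in>A. w i) = (\<Sum>A\<in>?S. \<Sum>i\<in>A. w i * (X A - E_Da a X)) / ?c0"
    unfolding Cov_Da_def E_Da_sum_weights[OF w] by (simp add: E_Da_def sum_distrib_right mult.commute)
  also have "\<dots> = (\<Sum>i\<in>UNIV. w i * ?c1 i * (E_Da_cond a i X - E_Da a X)) / ?c0"
    unfolding sum_subsets_sum_swap by (simp add: sum_distrib_left[symmetric] cond mult.assoc)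
  also have "\<dots> = real a / real CARD('n) * (\<Sum>i\<in>UNIV. w i * (E_Da_cond a i X - E_Da a X))"
    using c0 by (simp add: c1 sum_distrib_left sum_divide_distrib mult_ac card_gt_0_iff)
  finally show ?thesis .
qed

lemma Var_Da_sum_weights:
  fixes w :: "'n::finite \<Rightarrow> real"
  assumes w: "sum w UNIV = 0" and a: "a \<le> CARD('n)" and n: "2 \<le> CARD('n)"
  shows "Var_Da a (\<lambda>A. \<Sum>i\<in>A. w i)
           = real a * (real CARD('n) - real a) / (real CARD('n) * (real CARD('n) - 1))
             * (\<Sum>i\<in>UNIV. (w i)\<^sup>2)"
proof -
  let ?S = "subsets_a a :: 'n set set" and ?N = "real CARD('n)"
  let ?c0 = "real (card ?S)"
  define p where "p = real a * (real a - 1) / (?N * (?N - 1))"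
  have c0: "0 < ?c0" using a by (simp add: card_subsets_a)
  have N: "1 < ?N" using n by simp
  note c1 = card_subsets_a_mem_eq[of a]
  have c2: "real (card {A \<in> ?S. i \<in> A \<and> j \<in> A}) = p * ?c0" if "i \<noteq> j" for i j
    using card_subsets_a_mem2_eq[OF that, of a] by (simp add: p_def)
  define q where "q = (real a / ?N - p) * ?c0"
  have pairs: "real (card {A \<in> ?S. i \<in> A \<and> j \<in> A}) * (w i * w j)
      = p * ?c0 * w i * w j + (if i = j then q * (w i)\<^sup>2 else 0)" for i j
    by (cases "i = j") (simp_all add: c1 c2 q_def power2_eq_square algebra_simps)
  have "Var_Da a (\<lambda>A. \<Sum>i\<in>A. w i) = (\<Sum>A\<in>?S. \<Sum>i\<in>A. \<Sum>j\<in>A. w i * w j) / ?c0"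
    unfolding Var_Da_def Cov_Da_def E_Da_sum_weights[OF w]
    by (simp add: E_Da_def sum_product power2_eq_square)
  also have "\<dots> = (\<Sum>i\<in>UNIV. \<Sum>j\<in>UNIV. real (card {A \<in> ?S. i \<in> A \<and> j \<in> A}) * (w i * w j)) / ?c0"
    unfolding sum_subsets_sum_swap by (simp add: sum_subsets_sum_swap)
  also have "\<dots> = (\<Sum>i\<in>UNIV. q * (w i)\<^sup>2) / ?c0"
    unfolding pairs by (simp add: sum.distrib sum_distrib_left[symmetric] w)
  also have "\<dots> = q / ?c0 * (\<Sum>i\<in>UNIV. (w i)\<^sup>2)"
    by (simp add: sum_distrib_left[symmetric])
  also have "q / ?c0 = real a / ?N - p"
    using c0 by (simp add: q_def card_gt_0_iff)
  also have "\<dots> = real a * (?N - real a) / (?N * (?N - 1))"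
    using N by (simp add: p_def divide_simps) (simp add: algebra_simps)
  finally show ?thesis .
qed

section \<open>The attribution scores and the Pearson LDS\<close>

lemma psd_matrix_FS: "psd_matrix (FS L zs \<theta>S)"
  unfolding FS_def by (intro psd_matrix_scaleR psd_matrix_transpose_mult) simp

lemma tau_eq_Jac:
  assumes "0 < \<mu>"
  shows "tau L zs \<theta>S \<mu> z' (zs i)
           = - ((Jac L zs \<theta>S *v (resolvent (FS L zs \<theta>S) \<mu> *v grad (model_out L z') \<theta>S)) $ i)"
  unfolding tau_def resolvent_def[symmetric]
  using resolvent_self_adjoint[OF psd_matrix_FS[of L zs \<theta>S] assms,
      of "grad (model_out L z') \<theta>S" "grad (L (zs i)) \<theta>S"]
  by (simp add: matrix_vector_mul_component inner_commute Jac_def)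

lemma sum_tau_eq_0:
  assumes stat: "(\<Sum>i\<in>UNIV. grad (L (zs i)) \<theta>S) = 0" and "0 < \<mu>"
  shows "(\<Sum>i\<in>UNIV. tau L zs \<theta>S \<mu> z' (zs i)) = 0"
  using stat unfolding tau_eq_Jac[OF assms(2)]
  by (simp add: matrix_vector_mul_component Jac_def sum_negf flip: inner_sum_left)

lemma Cov_Da_attribution:
  fixes zs :: "'n::finite \<Rightarrow> 'z"
  assumes stat: "(\<Sum>i\<in>UNIV. grad (L (zs i)) \<theta>S) = 0" and \<mu>: "0 < \<mu>"
    and a: "1 \<le> a" "a \<le> CARD('n)"
  shows "Cov_Da a (\<lambda>A. model_out L z' (\<theta>A A)) (\<lambda>A. \<Sum>i\<in>A. tau L zs \<theta>S \<mu> z' (zs i))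
           = real a * r_val L zs \<theta>S \<theta>A a z' \<mu>"
proof -
  let ?N = "real CARD('n)" and ?J = "Jac L zs \<theta>S" and ?\<alpha> = "alpha L \<theta>A a z'"
  let ?R = "resolvent (FS L zs \<theta>S) \<mu>" and ?v = "grad (model_out L z') \<theta>S"
  have "(\<Sum>i\<in>UNIV. tau L zs \<theta>S \<mu> z' (zs i) * ?\<alpha> $ i) = - ((?J *v (?R *v ?v)) \<bullet> ?\<alpha>)"
    by (simp add: tau_eq_Jac[OF \<mu>] inner_vec_def sum_negf)
  also have "\<dots> = - ((?R *v ?v) \<bullet> (transpose ?J *v ?\<alpha>))"
    by (simp only: inner_matrix_vector_mult_transpose)
  also have "\<dots> = ?N * r_val L zs \<theta>S \<theta>A a z' \<mu>"
    unfolding r_val_def gvec_def resolvent_def[symmetric]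
    by (simp add: resolvent_self_adjoint[OF psd_matrix_FS \<mu>] matrix_vector_mult_scaleR)
  finally show ?thesis
    unfolding Cov_Da_sum_weights[OF sum_tau_eq_0[of L zs \<theta>S, OF stat \<mu>] a]
    by (simp add: alpha_def)
qed

lemma tk_Suc: "tk L zs \<theta>S (Suc k) z' \<mu>
    = grad (model_out L z') \<theta>S \<bullet> (resolvent (FS L zs \<theta>S) \<mu> *v
        ((\<lambda>x. resolvent (FS L zs \<theta>S) \<mu> *v x) ^^ k) (FS L zs \<theta>S *v grad (model_out L z') \<theta>S))"
  unfolding tk_def resolvent_def by (simp add: Let_def)

lemma Var_Da_attribution:
  fixes zs :: "'n::finite \<Rightarrow> 'z"
  assumes stat: "(\<Sum>i\<in>UNIV. grad (L (zs i)) \<theta>S) = 0" and \<mu>: "0 < \<mu>"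
    and a: "a \<le> CARD('n)" and n: "2 \<le> CARD('n)"
  shows "Var_Da a (\<lambda>A. \<Sum>i\<in>A. tau L zs \<theta>S \<mu> z' (zs i))
           = real a * (real CARD('n) - real a) / (real CARD('n) - 1) * tk L zs \<theta>S 2 z' \<mu>"
proof -
  let ?N = "real CARD('n)" and ?J = "Jac L zs \<theta>S" and ?F = "FS L zs \<theta>S"
  let ?R = "resolvent ?F \<mu>" and ?v = "grad (model_out L z') \<theta>S"
  have "(\<Sum>i\<in>UNIV. (tau L zs \<theta>S \<mu> z' (zs i))\<^sup>2) = (?J *v (?R *v ?v)) \<bullet> (?J *v (?R *v ?v))"
    by (simp add: tau_eq_Jac[OF \<mu>] inner_vec_def power2_eq_square)
  also have "\<dots> = ?N * ((?R *v ?v) \<bullet> (?F *v (?R *v ?v)))"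
    using n by (simp add: FS_def inner_transpose_mult_apply flip: scaleR_matrix_vector_assoc)
  also have "\<dots> = ?N * tk L zs \<theta>S 2 z' \<mu>"
    by (simp add: tk_Suc numeral_2_eq_2 resolvent_self_adjoint[OF psd_matrix_FS \<mu>]
        resolvent_commute[OF psd_matrix_FS \<mu>])
  finally show ?thesis
    unfolding Var_Da_sum_weights[OF sum_tau_eq_0[of L zs \<theta>S, OF stat \<mu>] a n]
    using n by (simp add: field_simps)
qed

lemma cp_eq_scaled_ratio:
  fixes zs :: "'n::finite \<Rightarrow> 'z"
  assumes stat: "(\<Sum>i\<in>UNIV. grad (L (zs i)) \<theta>S) = 0" and \<mu>: "0 < \<mu>"
    and a: "1 \<le> a" "a \<le> CARD('n)" and n: "2 \<le> CARD('n)"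
  shows "cp L zs \<theta>S \<theta>A a z' \<mu>
           = real a / (sqrt (Var_Da a (\<lambda>A. model_out L z' (\<theta>A A)))
                        * sqrt (real a * (real CARD('n) - real a) / (real CARD('n) - 1)))
             * (r_val L zs \<theta>S \<theta>A a z' \<mu> / sqrt (tk L zs \<theta>S 2 z' \<mu>))"
  unfolding cp_def pearson_Da_def Cov_Da_attribution[of L zs \<theta>S, OF stat \<mu> a]
    Var_Da_attribution[of L zs \<theta>S, OF stat \<mu> a(2) n]
  by (simp add: real_sqrt_mult real_sqrt_divide mult_ac)

lemma tk_pos:
  assumes "0 < \<mu>" "FS L zs \<theta>S *v grad (model_out L z') \<theta>S \<noteq> 0"
  shows "0 < tk L zs \<theta>S k z' \<mu>"
  unfolding tk_def resolvent_def[symmetric] Let_def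
  by (rule inner_resolvent_power_pos[OF psd_matrix_FS assms])

lemma o_val_pos:
  fixes zs :: "'n::finite \<Rightarrow> 'z"
  assumes "0 < \<mu>" "alpha L \<theta>A a z' \<noteq> 0"
  shows "0 < o_val L zs \<theta>S \<theta>A a z' \<mu>"
proof -
  have "psd_matrix (Jac L zs \<theta>S ** transpose (Jac L zs \<theta>S))"
    using psd_matrix_transpose_mult[of "transpose (Jac L zs \<theta>S)"] by simp
  moreover have "0 < real CARD('n) * \<mu>" using assms(1) by simp
  ultimately show ?thesis
    unfolding o_val_def resolvent_def[symmetric] by (rule inner_resolvent_pos[OF _ _ assms(2)])
qed

lemma tk2_has_real_derivative:
  assumes "0 < \<mu>"
  shows "((\<lambda>\<mu>. tk L zs \<theta>S 2 z' \<mu>) has_real_derivative - 2 * tk L zs \<theta>S 3 z' \<mu>) (at \<mu>)"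
  unfolding tk_Suc numeral_2_eq_2 numeral_3_eq_3
  using has_real_derivative_inner_resolvent_square[OF psd_matrix_FS assms] by simp

lemma r_val_has_real_derivative_bounded:
  fixes zs :: "'n::finite \<Rightarrow> 'z"
  assumes \<mu>: "0 < \<mu>"
  obtains r' where "((\<lambda>\<mu>. r_val L zs \<theta>S \<theta>A a z' \<mu>) has_real_derivative r') (at \<mu>)"
    and "r'\<^sup>2 \<le> tk L zs \<theta>S 3 z' \<mu> * o_val L zs \<theta>S \<theta>A a z' \<mu>"
proof
  let ?F = "FS L zs \<theta>S" and ?v = "grad (model_out L z') \<theta>S" and ?g = "gvec L zs \<theta>S \<theta>A a z'"
  let ?R = "resolvent ?F \<mu>"
  show "((\<lambda>\<mu>. r_val L zs \<theta>S \<theta>A a z' \<mu>) has_real_derivative ?v \<bullet> (?R *v (?R *v ?g))) (at \<mu>)"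
    unfolding r_val_def resolvent_def[symmetric]
    using has_real_derivative_inner_resolvent[OF psd_matrix_FS[of L zs \<theta>S] \<mu>, of ?v ?g] DERIV_minus
    by fastforce
  show "(?v \<bullet> (?R *v (?R *v ?g)))\<^sup>2 \<le> tk L zs \<theta>S 3 z' \<mu> * o_val L zs \<theta>S \<theta>A a z' \<mu>"
    using resolvent_gram_cauchy_schwarz[OF _ \<mu> FS_def[of L zs \<theta>S], of ?v "alpha L \<theta>A a z'"]
    unfolding gvec_def o_val_def tk_Suc numeral_3_eq_3 resolvent_def[symmetric] by simp
qed

lemma has_real_derivative_ratio_sqrt_pos:
  fixes r t :: "real \<Rightarrow> real"
  assumes r: "(r has_real_derivative r') (at l)" and t: "(t has_real_derivative - 2 * t3) (at l)"
    and pos: "0 < t l" "0 < t3" "0 < q" and bound: "r'\<^sup>2 \<le> t3 * q"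
    and less: "t l / sqrt t3 < r l / sqrt q"
  shows "\<exists>D > 0. ((\<lambda>\<mu>. r \<mu> / sqrt (t \<mu>)) has_real_derivative D) (at l)"
proof -
  let ?s = "sqrt (t l)"
  have s: "0 < ?s" "?s * ?s = t l" using pos(1) by simp_all
  have "((\<lambda>\<mu>. r \<mu> / sqrt (t \<mu>)) has_real_derivative
      (r' * ?s - inverse ?s / 2 * (- 2 * t3) * r l) / ?s ^ 2) (at l)"
    using DERIV_quotient[OF r DERIV_chain2[OF DERIV_real_sqrt[OF pos(1)] t]] s by simp
  moreover have "0 < (r' * ?s - inverse ?s / 2 * (- 2 * t3) * r l) / ?s ^ 2"
  proof -
    have "\<bar>r'\<bar> \<le> sqrt (t3 * q)" using bound real_le_rsqrt by (metis real_sqrt_abs real_sqrt_le_mono)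
    then have "- r' * t l \<le> sqrt (t3 * q) * t l" using pos(1) by (intro mult_right_mono) auto
    also have "\<dots> < r l * t3"
    proof -
      have "t l * sqrt q < r l * sqrt t3" using less pos by (simp add: field_simps)
      have "sqrt (t3 * q) * t l = t l * sqrt q * sqrt t3" by (simp add: real_sqrt_mult mult_ac)
      also have "\<dots> < r l * sqrt t3 * sqrt t3"
        using \<open>t l * sqrt q < r l * sqrt t3\<close> pos(2) by (intro mult_strict_right_mono) auto
      also have "\<dots> = r l * t3" using pos(2) by (simp add: mult.assoc)
      finally show ?thesis .
    qed
    finally have "0 < r' * t l + r l * t3" by simp
    then have "0 < (r' * t l + r l * t3) / (?s * t l)" using s pos by simp
    also have "\<dots> = (r' * ?s - inverse ?s / 2 * (- 2 * t3) * r l) / ?s ^ 2"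
      using s by (simp add: field_simps power2_eq_square)
    finally show ?thesis .
  qed
  ultimately show ?thesis by blast
qed

theorem theorem1:
  fixes L :: "'z \<Rightarrow> real^'p \<Rightarrow> real"
    and zs :: "'n::finite \<Rightarrow> 'z"
    and \<theta>S :: "real^'p"
    and \<theta>A :: "'n set \<Rightarrow> real^'p"
    and a :: nat and z' :: 'z and lam :: real
  assumes n2: "CARD('n) \<ge> 2"
    and L_pos: "\<And>z \<theta>. L z \<theta> > 0"
    and L_diff: "\<And>z \<theta>. (\<lambda>\<theta>. L z \<theta>) differentiable (at \<theta>)"
    and stat: "(\<Sum>i\<in>UNIV. grad (L (zs i)) \<theta>S) = 0"
    and a_pos: "1 \<le> a" and a_lt: "a < CARD('n)"
    and lam: "lam > 0"
    and F_grad: "FS L zs \<theta>S *v grad (model_out L z') \<theta>S \<noteq> 0"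
    and var_pos: "Var_Da a (\<lambda>A. model_out L z' (\<theta>A A)) > 0"
    and alpha_nz: "alpha L \<theta>A a z' \<noteq> 0"
    and cond: "r_val L zs \<theta>S \<theta>A a z' lam / sqrt (o_val L zs \<theta>S \<theta>A a z' lam * tk L zs \<theta>S 1 z' lam)
               > tk L zs \<theta>S 2 z' lam / sqrt (tk L zs \<theta>S 3 z' lam * tk L zs \<theta>S 1 z' lam)"
  shows "\<exists>D. ((\<lambda>\<mu>. cp L zs \<theta>S \<theta>A a z' \<mu>) has_real_derivative D) (at lam) \<and> D > 0"
proof -
  let ?X = "\<lambda>A. model_out L z' (\<theta>A A)" and ?N = "real CARD('n)"
  let ?r = "r_val L zs \<theta>S \<theta>A a z'" and ?t = "\<lambda>k. tk L zs \<theta>S k z'"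
  let ?o = "o_val L zs \<theta>S \<theta>A a z' lam"
  define C where "C = real a / (sqrt (Var_Da a ?X) * sqrt (real a * (?N - real a) / (?N - 1)))"
  have "0 < C" using a_pos a_lt n2 var_pos by (simp add: C_def)
  have cp: "cp L zs \<theta>S \<theta>A a z' \<mu> = C * (?r \<mu> / sqrt (?t 2 \<mu>))" if "0 < \<mu>" for \<mu>
    unfolding C_def
    by (rule cp_eq_scaled_ratio[of L zs \<theta>S \<mu> a \<theta>A z', OF stat that a_pos less_imp_le[OF a_lt] n2])
  obtain r' where r': "(?r has_real_derivative r') (at lam)" and bound: "r'\<^sup>2 \<le> ?t 3 lam * ?o"
    by (rule r_val_has_real_derivative_bounded[OF lam])
  have t_pos: "0 < ?t k lam" for k using tk_pos[OF lam F_grad] .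
  have "?t 2 lam / sqrt (?t 3 lam) < ?r lam / sqrt ?o"
    using cond t_pos[of 1]
    by (metis divide_divide_eq_left divide_less_cancel real_sqrt_gt_zero real_sqrt_mult)
  then obtain D where "0 < D" and D: "((\<lambda>\<mu>. ?r \<mu> / sqrt (?t 2 \<mu>)) has_real_derivative D) (at lam)"
    using has_real_derivative_ratio_sqrt_pos[OF r' tk2_has_real_derivative[OF lam] t_pos t_pos
        o_val_pos[OF lam alpha_nz] bound] by blast
  have "((\<lambda>\<mu>. cp L zs \<theta>S \<theta>A a z' \<mu>) has_real_derivative C * D) (at lam)"
    by (rule has_field_derivative_transform_within_open[OF DERIV_cmult[OF D] open_greaterThan[of 0]])
      (simp_all add: lam cp)
  then show ?thesis using \<open>0 < C\<close> \<open>0 < D\<close> by (intro exI[of _ "C * D"]) simp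
qed

end
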